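(* Let $X_1$ and $X_2$ be two elliptic ovoids of $Q_0$ meeting in a conic. If $x\in X_1\setminus X_2$, then there exist exactly two distinct elliptic ovoids of $Q_0$ containing $x$ which are tangent to both $X_1$ and $X_2$. If $x\in X_1\cap X_2$, then there is no elliptic ovoid of $Q_0$ containing $x$ which is tangent to both $X_1$ and $X_2$.
   Context: Let $q=2^n$ and let $Q_0\cong Q(4,q)$ be the parabolic quadric generalized quadrangle in $\mathrm{PG}(4,q)$. An elliptic ovoid of $Q_0$ is a set $X=S\cap Q_0$ where $S$ is a $3$-dimensional projective subspace meeting $Q_0$ in an elliptic quadric $Q^-(3,q)$. Two distinct elliptic ovoids meet either in exactly one point (then they are called tangent) or in a non-degenerate conic. *)

theory Defs
  imports "HOL-Analysis.Finite_Cartesian_Product"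
begin

text \<open>Vectors of the 5-dimensional space V(5,F); points of PG(4,F) are the
  1-dimensional subspaces, represented as the set of nonzero multiples of a
  nonzero vector.\<close>

definition vadd :: "'a::field^5 \<Rightarrow> 'a^5 \<Rightarrow> 'a^5" where
  "vadd u w = (\<chi> i. u$i + w$i)"

definition vsmult :: "'a::field \<Rightarrow> 'a^5 \<Rightarrow> 'a^5" where
  "vsmult c v = (\<chi> i. c * v$i)"

definition pt :: "'a::field^5 \<Rightarrow> ('a^5) set" where
  "pt v = {vsmult c v | c. c \<noteq> 0}"

definition qform :: "(5 \<Rightarrow> 5 \<Rightarrow> 'a::field) \<Rightarrow> 'a^5 \<Rightarrow> 'a" where
  "qform A x = (\<Sum>i\<in>UNIV. \<Sum>j\<in>UNIV. A i j * x$i * x$j)"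

definition polar :: "(5 \<Rightarrow> 5 \<Rightarrow> 'a::field) \<Rightarrow> 'a^5 \<Rightarrow> 'a^5 \<Rightarrow> 'a" where
  "polar A x y = qform A (vadd x y) - qform A x - qform A y"

definition lin :: "'a::field^5 \<Rightarrow> 'a^5 \<Rightarrow> 'a" where
  "lin h x = (\<Sum>i\<in>UNIV. h$i * x$i)"

definition lin_indep2 :: "'a::field^5 \<Rightarrow> 'a^5 \<Rightarrow> bool" where
  "lin_indep2 u w \<longleftrightarrow> (\<forall>a b. vadd (vsmult a u) (vsmult b w) = 0 \<longrightarrow> a = 0 \<and> b = 0)"

text \<open>The quadric of PG(4,F) defined by the form; it is non-degenerate
  (i.e. parabolic, isomorphic to Q(4,q)) iff it has no singular point.\<close>
definition quadric_pts :: "(5 \<Rightarrow> 5 \<Rightarrow> 'a::field) \<Rightarrow> ('a^5) set set" where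
  "quadric_pts A = {pt v | v. v \<noteq> 0 \<and> qform A v = 0}"

definition parabolic :: "(5 \<Rightarrow> 5 \<Rightarrow> 'a::field) \<Rightarrow> bool" where
  "parabolic A \<longleftrightarrow>
     (\<forall>v. v \<noteq> 0 \<and> qform A v = 0 \<longrightarrow> (\<exists>w. polar A v w \<noteq> 0))"

definition solid_section :: "(5 \<Rightarrow> 5 \<Rightarrow> 'a::field) \<Rightarrow> 'a^5 \<Rightarrow> ('a^5) set set" where
  "solid_section A h = {pt v | v. v \<noteq> 0 \<and> qform A v = 0 \<and> lin h v = 0}"

text \<open>The section by the solid is an elliptic quadric Q^-(3,q): it is
  non-degenerate (no singular point within the solid) and contains no line.\<close>
definition elliptic_solid :: "(5 \<Rightarrow> 5 \<Rightarrow> 'a::field) \<Rightarrow> 'a^5 \<Rightarrow> bool" where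
  "elliptic_solid A h \<longleftrightarrow> h \<noteq> 0 \<and>
     (\<forall>v. v \<noteq> 0 \<and> lin h v = 0 \<and> qform A v = 0 \<longrightarrow>
        (\<exists>w. lin h w = 0 \<and> polar A v w \<noteq> 0)) \<and>
     \<not> (\<exists>u w. lin_indep2 u w \<and> lin h u = 0 \<and> lin h w = 0 \<and>
           (\<forall>a b. qform A (vadd (vsmult a u) (vsmult b w)) = 0))"

definition elliptic_ovoid :: "(5 \<Rightarrow> 5 \<Rightarrow> 'a::field) \<Rightarrow> ('a^5) set set \<Rightarrow> bool" where
  "elliptic_ovoid A X \<longleftrightarrow> (\<exists>h. elliptic_solid A h \<and> X = solid_section A h)"

definition nondeg_conic :: "(5 \<Rightarrow> 5 \<Rightarrow> 'a::field) \<Rightarrow> ('a^5) set set \<Rightarrow> bool" where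
  "nondeg_conic A C \<longleftrightarrow> (\<exists>h1 h2. lin_indep2 h1 h2 \<and>
     C = {pt v | v. v \<noteq> 0 \<and> qform A v = 0 \<and> lin h1 v = 0 \<and> lin h2 v = 0} \<and>
     (\<forall>v. v \<noteq> 0 \<and> lin h1 v = 0 \<and> lin h2 v = 0 \<and> qform A v = 0 \<longrightarrow>
        (\<exists>w. lin h1 w = 0 \<and> lin h2 w = 0 \<and> polar A v w \<noteq> 0)))"

definition tangent :: "('a^5) set set \<Rightarrow> ('a^5) set set \<Rightarrow> bool" where
  "tangent X Y \<longleftrightarrow> X \<noteq> Y \<and> (\<exists>p. X \<inter> Y = {p})"

end

theory Submission
  imports Defs
begin

text \<open>In characteristic two the polar form of \<open>Q(4,q)\<close> has a one-dimensional radical, the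
  nucleus \<open>N\<close>. An elliptic ovoid through \<open>x \<in> X1\<close> tangent to \<open>X1\<close> lies in a solid of the pencil
  through the tangent plane of \<open>X1\<close> at \<open>x\<close>; every such solid is elliptic, being the image of the
  solid of \<open>X1\<close> under an isometric involution. The solid with parameter \<open>a\<close> is tangent to \<open>X2\<close>
  exactly when \<open>a t\<close> is a root of \<open>Q(N) z\<^sup>2 + z + Q(l)\<close>, where \<open>l\<close> is the pole of the plane of
  the conic \<open>X1 \<inter> X2\<close> and \<open>t\<close> vanishes iff \<open>x \<in> X2\<close>. Non-degeneracy of the conic gives
  \<open>Q(l) \<noteq> 0\<close>, so for \<open>x \<in> X1 \<inter> X2\<close> there is no solution. For \<open>x \<notin> X2\<close> the quadratic has a
  root, since otherwise an Arf invariant computation would produce a line in the elliptic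
  quadric \<open>X2\<close>; in characteristic two it then has exactly two roots, giving two ovoids.\<close>

lemma vadd_eq_plus: "vadd u w = u + w"
  by (simp add: vadd_def vec_eq_iff)

lemma vsmult_eq_smult: "vsmult c v = c *s v"
  by (simp add: vsmult_def vec_eq_iff)

lemma polar_expand:
  "polar A x y = (\<Sum>i\<in>UNIV. \<Sum>j\<in>UNIV. A i j * (x$i * y$j + y$i * x$j))"
  unfolding polar_def qform_def vadd_def
  by (simp add: sum_subtractf[symmetric] algebra_simps)

lemma qform_add: "qform A (x + y) = qform A x + qform A y + polar A x y"
  by (simp add: polar_def vadd_eq_plus)

lemma qform_smult: "qform A (c *s x) = c^2 * qform A x"
  unfolding qform_def by (simp add: sum_distrib_left algebra_simps power2_eq_square)

lemma qform_zero [simp]: "qform A 0 = 0"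
  unfolding qform_def by simp

lemma polar_add_left: "polar A (x + y) z = polar A x z + polar A y z"
  unfolding polar_expand by (simp add: sum.distrib[symmetric] algebra_simps)

lemma polar_add_right: "polar A z (x + y) = polar A z x + polar A z y"
  unfolding polar_expand by (simp add: sum.distrib[symmetric] algebra_simps)

lemma polar_smult_left: "polar A (c *s x) z = c * polar A x z"
  unfolding polar_expand by (simp add: sum_distrib_left algebra_simps)

lemma polar_smult_right: "polar A z (c *s x) = c * polar A z x"
  unfolding polar_expand by (simp add: sum_distrib_left algebra_simps)

lemma polar_commute: "polar A x y = polar A y x"
  unfolding polar_expand by (simp add: algebra_simps)

lemma polar_zero_right [simp]: "polar A y 0 = 0"
  unfolding polar_expand by simp

lemma qform_lincomb:
  "qform A (a *s x + b *s y) = a^2 * qform A x + b^2 * qform A y + a * b * polar A x y"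
  by (simp add: qform_add qform_smult polar_smult_left polar_smult_right)

lemma lin_add: "lin h (x + y) = lin h x + lin h y"
  unfolding lin_def by (simp add: sum.distrib[symmetric] algebra_simps)

lemma lin_smult: "lin h (c *s x) = c * lin h x"
  unfolding lin_def by (simp add: sum_distrib_left algebra_simps)

lemma lin_add_coeffs: "lin (h + k) x = lin h x + lin k x"
  unfolding lin_def by (simp add: sum.distrib[symmetric] algebra_simps)

lemma lin_smult_coeffs: "lin (c *s h) x = c * lin h x"
  unfolding lin_def by (simp add: sum_distrib_left algebra_simps)

lemma lin_zero [simp]: "lin h 0 = 0" "lin 0 x = 0"
  unfolding lin_def by simp_all

lemma lin_axis: "lin h (axis i 1) = h $ i"
  unfolding lin_def axis_def by (simp add: if_distrib cong: if_cong)

lemma lin_eq_0_iff: "(\<forall>v. lin h v = 0) \<longleftrightarrow> h = 0"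
  by (metis lin_axis lin_zero(2) vec_eq_iff zero_index)

lemma ex_lin_eq_polar: "\<exists>g. \<forall>v. lin g v = polar A w v"
proof -
  let ?g = "\<chi> j. \<Sum>i\<in>UNIV. (A i j + A j i) * w$i"
  have "lin ?g v = polar A w v" for v
    unfolding lin_def polar_expand
    apply (simp add: sum_distrib_left sum_distrib_right algebra_simps)
    apply (subst (2) sum.swap)
    apply (simp add: algebra_simps sum.distrib)
    apply (rule sum.swap)
    done
  thus ?thesis by blast
qed

definition vec_subspace :: "('a::field^5) set \<Rightarrow> bool" where
  "vec_subspace S \<longleftrightarrow> 0 \<in> S \<and> (\<forall>x\<in>S. \<forall>y\<in>S. x + y \<in> S) \<and> (\<forall>c. \<forall>x\<in>S. c *s x \<in> S)"

definition linear_functional :: "('a::field^5 \<Rightarrow> 'a) \<Rightarrow> bool" where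
  "linear_functional \<phi> \<longleftrightarrow> (\<forall>x y. \<phi> (x + y) = \<phi> x + \<phi> y) \<and> (\<forall>c x. \<phi> (c *s x) = c * \<phi> x)"

lemma linear_functional_lin: "linear_functional (lin h)"
  by (simp add: linear_functional_def lin_add lin_smult)

lemma linear_functional_polar: "linear_functional (polar A w)"
  by (simp add: linear_functional_def polar_add_right polar_smult_right)

context
  fixes \<phi> :: "'a::field^5 \<Rightarrow> 'a"
  assumes \<phi>: "linear_functional \<phi>"
begin

lemma linear_functional_add: "\<phi> (x + y) = \<phi> x + \<phi> y"
  using \<phi> by (simp add: linear_functional_def)

lemma linear_functional_smult: "\<phi> (c *s x) = c * \<phi> x"
  using \<phi> by (simp add: linear_functional_def)

lemma linear_functional_diff: "\<phi> (x - y) = \<phi> x - \<phi> y"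
  using linear_functional_add[of "x - y" y] by simp

lemma linear_functional_zero: "\<phi> 0 = 0"
  using linear_functional_smult[of 0 0] by simp

end

lemma vec_subspace_UNIV: "vec_subspace UNIV"
  by (simp add: vec_subspace_def)

lemma vec_subspace_kernel:
  "vec_subspace S \<Longrightarrow> linear_functional \<phi> \<Longrightarrow> vec_subspace {v\<in>S. \<phi> v = 0}"
  by (auto simp: vec_subspace_def linear_functional_add linear_functional_smult linear_functional_zero)

lemma vec_subspace_lincomb:
  "vec_subspace S \<Longrightarrow> x \<in> S \<Longrightarrow> y \<in> S \<Longrightarrow> a *s x + b *s y \<in> S"
  by (simp add: vec_subspace_def)

lemma vec_subspace_diff:
  assumes "vec_subspace S" "x \<in> S" "y \<in> S" shows "x - y \<in> S"
  using vec_subspace_lincomb[OF assms, of 1 "-1"] by (simp add: vector_sneg_minus1[symmetric])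

text \<open>Dimensions are tracked by counting vectors.\<close>

lemma card_subspace_eq_card_kernel:
  fixes S :: "('a::{field,finite}^5) set"
  assumes S: "vec_subspace S" and \<phi>: "linear_functional \<phi>" and e: "e \<in> S" "\<phi> e \<noteq> 0"
  shows "card S = CARD('a) * card {v\<in>S. \<phi> v = 0}"
proof -
  let ?K = "{v\<in>S. \<phi> v = 0}"
  let ?F = "\<lambda>v. (v - (\<phi> v / \<phi> e) *s e, \<phi> v)"
  have "bij_betw ?F S (?K \<times> UNIV)"
  proof (rule bij_betw_byWitness[where f'="\<lambda>(w,t). w + (t / \<phi> e) *s e"])
    show "\<forall>a\<in>S. (case ?F a of (w, t) \<Rightarrow> w + (t / \<phi> e) *s e) = a" by simp
    show "\<forall>a'\<in>?K \<times> UNIV. ?F (case a' of (w, t) \<Rightarrow> w + (t / \<phi> e) *s e) = a'"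
      using e by (auto simp: linear_functional_add[OF \<phi>] linear_functional_smult[OF \<phi>])
    show "?F ` S \<subseteq> ?K \<times> UNIV"
      using e S by (auto simp: linear_functional_diff[OF \<phi>] linear_functional_smult[OF \<phi>]
          vec_subspace_def intro!: vec_subspace_diff[OF S])
    show "(\<lambda>(w, t). w + (t / \<phi> e) *s e) ` (?K \<times> UNIV) \<subseteq> S"
      using e S by (auto simp: vec_subspace_def)
  qed
  hence "card S = card (?K \<times> (UNIV::'a set))" by (rule bij_betw_same_card)
  thus ?thesis by (simp add: card_cartesian_product)
qed

lemma card_kernel_eq_power:
  fixes S :: "('a::{field,finite}^5) set"
  assumes "vec_subspace S" "linear_functional \<phi>" "e \<in> S" "\<phi> e \<noteq> 0" "card S = CARD('a)^Suc k"
  shows "card {v\<in>S. \<phi> v = 0} = CARD('a)^k"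
  using card_subspace_eq_card_kernel[OF assms(1-4)] assms(5) by simp

lemma card_kernel_lin:
  fixes h :: "'a::{field,finite}^5"
  assumes "h \<noteq> 0" shows "card {v. lin h v = 0} = CARD('a)^4"
proof -
  obtain e where "lin h e \<noteq> 0" using assms lin_eq_0_iff by blast
  thus ?thesis using card_kernel_eq_power[OF vec_subspace_UNIV linear_functional_lin, of e h 4] by simp
qed

lemma linear_functional_kernel_subset_imp_multiple:
  assumes \<phi>: "linear_functional \<phi>" and \<psi>: "linear_functional \<psi>"
    and ker: "\<forall>v. \<phi> v = 0 \<longrightarrow> \<psi> v = 0"
  shows "\<exists>a. \<forall>v. \<psi> v = a * \<phi> v"
proof (cases "\<forall>v. \<phi> v = 0")
  case True thus ?thesis using ker by auto
next
  case False
  then obtain e where e: "\<phi> e \<noteq> 0" by blast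
  have "\<psi> v = (\<psi> e / \<phi> e) * \<phi> v" for v
  proof -
    have "\<phi> (v - (\<phi> v / \<phi> e) *s e) = 0"
      using e by (simp add: linear_functional_diff[OF \<phi>] linear_functional_smult[OF \<phi>])
    hence "\<psi> (v - (\<phi> v / \<phi> e) *s e) = 0" using ker by blast
    thus ?thesis by (simp add: linear_functional_diff[OF \<psi>] linear_functional_smult[OF \<psi>])
  qed
  thus ?thesis by blast
qed

lemma linear_functional_kernel_subset_imp_lincomb:
  assumes \<phi>1: "linear_functional \<phi>1" and \<phi>2: "linear_functional \<phi>2" and \<psi>: "linear_functional \<psi>"
    and ker: "\<forall>v. \<phi>1 v = 0 \<and> \<phi>2 v = 0 \<longrightarrow> \<psi> v = 0"
  shows "\<exists>a b. \<forall>v. \<psi> v = a * \<phi>1 v + b * \<phi>2 v"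
proof (cases "\<forall>v. \<phi>1 v = 0")
  case True
  then obtain b where "\<forall>v. \<psi> v = b * \<phi>2 v"
    using linear_functional_kernel_subset_imp_multiple[OF \<phi>2 \<psi>] ker by blast
  thus ?thesis by (metis add_0 mult_zero_left)
next
  case False
  then obtain e0 where e0: "\<phi>1 e0 \<noteq> 0" by blast
  define e where "e = (1 / \<phi>1 e0) *s e0"
  have e: "\<phi>1 e = 1" using e0 by (simp add: e_def linear_functional_smult[OF \<phi>1])
  \<comment> \<open>Restrict to the kernel of \<open>\<phi>1\<close> along the complement spanned by \<open>e\<close>.\<close>
  define proj where "proj v = v - \<phi>1 v *s e" for v
  have proj_add: "proj (x + y) = proj x + proj y" and proj_smult: "proj (c *s x) = c *s proj x" for c x y
    by (simp_all add: proj_def linear_functional_add[OF \<phi>1] linear_functional_smult[OF \<phi>1]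
        vector_sadd_rdistrib vector_add_ldistrib vector_ssub_ldistrib vector_smult_assoc)
  have lin_comp: "linear_functional (\<lambda>v. \<theta> (proj v))" if \<theta>: "linear_functional \<theta>" for \<theta>
    unfolding linear_functional_def
    by (simp add: proj_add proj_smult linear_functional_add[OF \<theta>] linear_functional_smult[OF \<theta>])
  have "\<phi>1 (proj v) = 0" for v
    by (simp add: proj_def linear_functional_diff[OF \<phi>1] linear_functional_smult[OF \<phi>1] e)
  hence "\<forall>v. \<phi>2 (proj v) = 0 \<longrightarrow> \<psi> (proj v) = 0" using ker by blast
  then obtain b where b: "\<forall>v. \<psi> (proj v) = b * \<phi>2 (proj v)"
    using linear_functional_kernel_subset_imp_multiple[OF lin_comp[OF \<phi>2] lin_comp[OF \<psi>]] by blast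
  have "\<psi> v = (\<psi> e - b * \<phi>2 e) * \<phi>1 v + b * \<phi>2 v" for v
    using b[rule_format, of v] unfolding proj_def
    by (simp add: linear_functional_diff[OF \<psi>] linear_functional_smult[OF \<psi>]
        linear_functional_diff[OF \<phi>2] linear_functional_smult[OF \<phi>2] algebra_simps)
  thus ?thesis by blast
qed

lemma card_field_ge_2: "CARD('a::{field,finite}) \<ge> 2"
proof -
  have "card {0::'a, 1} \<le> CARD('a)" by (intro card_mono) auto
  thus ?thesis by simp
qed

definition multiples :: "'a::field^5 \<Rightarrow> ('a^5) set" where
  "multiples r = range (\<lambda>c. c *s r)"

lemma card_multiples: "(r::'a::{field,finite}^5) \<noteq> 0 \<Longrightarrow> card (multiples r) = CARD('a)"
  unfolding multiples_def by (rule card_image) (auto simp: inj_on_def vec_eq_iff)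

lemma multiples_subset: "vec_subspace S \<Longrightarrow> r \<in> S \<Longrightarrow> multiples r \<subseteq> S"
  by (auto simp: multiples_def vec_subspace_def)

lemma card_gt_1_ex_nonzero:
  assumes "card S > 1" shows "\<exists>r\<in>S. r \<noteq> (0::'a::{field,finite}^5)"
proof (rule ccontr)
  assume "\<not> ?thesis"
  hence "card S \<le> card {0::'a^5}" by (intro card_mono) auto
  thus False using assms by simp
qed

lemma card_gt_ex_not_multiple:
  assumes "card S > CARD('a)" "r \<noteq> 0"
  shows "\<exists>u\<in>S. u \<notin> multiples (r::'a::{field,finite}^5)"
proof (rule ccontr)
  assume "\<not> ?thesis"
  hence "card S \<le> card (multiples r)" by (intro card_mono) auto
  thus False using assms card_multiples[OF assms(2)] by simp
qed

lemma subspace_eq_multiples: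
  assumes "vec_subspace S" "card S = CARD('a)" "r \<in> S" "r \<noteq> (0::'a::{field,finite}^5)"
  shows "S = multiples r"
  by (metis assms card_multiples multiples_subset card_subset_eq finite)

lemma lin_indep2_if_not_multiple:
  assumes "x \<noteq> 0" "\<forall>c. y \<noteq> c *s x" shows "lin_indep2 x y"
  unfolding lin_indep2_def vadd_eq_plus vsmult_eq_smult
proof (intro allI impI)
  fix a b assume ab: "a *s x + b *s y = 0"
  show "a = 0 \<and> b = 0"
  proof (cases "b = 0")
    case True thus ?thesis using ab assms(1) by (auto simp: vec_eq_iff)
  next
    case False
    hence "y = (- a / b) *s x" using ab
      by (simp add: vec_eq_iff field_simps) (metis add.commute add_eq_0_iff2)
    thus ?thesis using assms(2) by blast
  qed
qed

lemma mem_pt_iff: "v \<in> pt w \<longleftrightarrow> (\<exists>c. c \<noteq> 0 \<and> v = c *s w)"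
  by (auto simp: pt_def vsmult_eq_smult)

lemma mem_pt_self: "v \<in> pt v"
  by (auto simp: mem_pt_iff intro: exI[of _ 1])

lemma pt_eqD: "pt v = pt w \<Longrightarrow> \<exists>c. c \<noteq> 0 \<and> v = c *s w"
  using mem_pt_self mem_pt_iff by metis

lemma pt_eqI:
  assumes "c \<noteq> 0" "v = c *s w" shows "pt v = pt w"
proof (intro set_eqI iffI)
  fix x assume "x \<in> pt v"
  then obtain d where "d \<noteq> 0" "x = d *s v" by (auto simp: mem_pt_iff)
  thus "x \<in> pt w" using assms by (auto simp: mem_pt_iff vector_smult_assoc intro!: exI[of _ "d*c"])
next
  fix x assume "x \<in> pt w"
  then obtain d where "d \<noteq> 0" "x = d *s w" by (auto simp: mem_pt_iff)
  thus "x \<in> pt v" using assms by (auto simp: mem_pt_iff vector_smult_assoc intro!: exI[of _ "d/c"])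
qed

lemma pt_in_solid_section_iff:
  assumes "v \<noteq> 0"
  shows "pt v \<in> solid_section A h \<longleftrightarrow> qform A v = 0 \<and> lin h v = 0"
proof
  assume "pt v \<in> solid_section A h"
  then obtain u where u: "pt v = pt u" "qform A u = 0" "lin h u = 0"
    by (auto simp: solid_section_def)
  then obtain c where "v = c *s u" using pt_eqD by blast
  thus "qform A v = 0 \<and> lin h v = 0" using u by (simp add: qform_smult lin_smult)
qed (use assms in \<open>auto simp: solid_section_def\<close>)

lemma solid_sectionE:
  assumes "X \<in> solid_section A h"
  obtains v where "v \<noteq> 0" "X = pt v" "qform A v = 0" "lin h v = 0"
  using assms by (auto simp: solid_section_def)

lemma solid_section_cong:
  "(\<And>v. lin h' v = 0 \<longleftrightarrow> lin h v = 0) \<Longrightarrow> solid_section A h' = solid_section A h"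
  by (auto simp: solid_section_def)

lemma elliptic_solid_cong:
  assumes "\<And>v. lin h' v = 0 \<longleftrightarrow> lin h v = 0"
  shows "elliptic_solid A h' \<longleftrightarrow> elliptic_solid A h"
proof -
  have "h' \<noteq> 0 \<longleftrightarrow> h \<noteq> 0" using assms lin_eq_0_iff by metis
  thus ?thesis using assms unfolding elliptic_solid_def by simp
qed

section \<open>Fields of characteristic two\<close>

lemma even_card_if_fixpoint_free_involution:
  assumes "finite S" "\<forall>x\<in>S. g x \<in> S \<and> g x \<noteq> x \<and> g (g x) = x"
  shows "even (card S)"
  using assms
proof (induction "card S" arbitrary: S rule: less_induct)
  case less
  show ?case
  proof (cases "S = {}")
    case False
    then obtain x where x: "x \<in> S" by blast
    define S' where "S' = S - {x, g x}"
    have gx: "g x \<in> S" "g x \<noteq> x" using less.prems x by auto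
    have sub: "{x, g x} \<subseteq> S" using x gx by auto
    have "card {x, g x} \<le> card S" using card_mono[OF less.prems(1) sub] .
    hence card_S: "card S = card S' + 2"
      unfolding S'_def using less.prems(1) gx(2) sub by (simp add: card_Diff_subset)
    have ggx: "g (g x) = x" using less.prems(2) x by blast
    have "\<forall>y\<in>S'. g y \<in> S' \<and> g y \<noteq> y \<and> g (g y) = y"
    proof
      fix y assume y: "y \<in> S'"
      have y': "y \<in> S" "y \<noteq> x" "y \<noteq> g x" using y by (auto simp: S'_def)
      hence gy: "g y \<in> S" "g y \<noteq> y" "g (g y) = y" using less.prems(2) by auto
      have "g y \<noteq> x" using gy(3) y'(3) by auto
      moreover have "g y \<noteq> g x" using gy(3) ggx y'(2) by metis
      ultimately show "g y \<in> S' \<and> g y \<noteq> y \<and> g (g y) = y" using gy by (simp add: S'_def)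
    qed
    hence "even (card S')" using less.hyps[of S'] card_S less.prems(1) unfolding S'_def by simp
    thus ?thesis using card_S by simp
  qed simp
qed

lemma char2_if_card_power2:
  assumes q: "CARD('a::{field,finite}) = 2 ^ n"
  shows "(1::'a) + 1 = 0"
proof (rule ccontr)
  assume two: "(1::'a) + 1 \<noteq> 0"
  \<comment> \<open>Otherwise \<open>x \<mapsto> -x\<close> pairs off the nonzero elements, so \<open>|F|\<close> is odd.\<close>
  have "\<forall>x\<in>UNIV - {0::'a}. - x \<in> UNIV - {0} \<and> - x \<noteq> x \<and> - (- x) = x"
  proof
    fix x :: 'a assume x: "x \<in> UNIV - {0}"
    have "- x \<noteq> x"
    proof
      assume "- x = x" hence "(1 + 1) * x = 0" by (simp add: algebra_simps)
      thus False using two x by simp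
    qed
    thus "- x \<in> UNIV - {0} \<and> - x \<noteq> x \<and> - (- x) = x" using x by simp
  qed
  hence "even (card (UNIV - {0::'a}))" by (rule even_card_if_fixpoint_free_involution[rotated]) simp
  hence "odd (CARD('a))" by (simp add: card_Diff_subset)
  moreover have "n \<noteq> 0" using q card_field_ge_2[where 'a='a] by (cases n) auto
  ultimately show False using q by simp
qed

definition artin_schreier_image :: "'a::field set" where
  "artin_schreier_image = range (\<lambda>z. z^2 + z)"

locale char2_form =
  fixes A :: "5 \<Rightarrow> 5 \<Rightarrow> 'a::{field,finite}"
  assumes char2: "(1::'a) + 1 = 0"
begin

abbreviation "Q \<equiv> qform A"
abbreviation "f \<equiv> polar A"

lemma two_eq_0 [simp]: "(2::'a) = 0"
  using char2 by (simp only: one_add_one)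

lemma add_self_eq_0 [simp]: "(x::'a) + x = 0"
  using mult_2[of x] by simp

lemma add_self_cancel [simp]: "(x::'a) + (x + y) = y"
  by (simp add: add.assoc[symmetric])

lemma sum_eq_0_iff_eq: "(x::'a) + y = 0 \<longleftrightarrow> x = y"
proof
  assume "x + y = 0"
  have "y = x + (x + y)" by simp
  also have "\<dots> = x" using \<open>x + y = 0\<close> by simp
  finally show "x = y" by simp
qed simp

lemma vec_add_self_eq_0 [simp]: "(v::'a^5) + v = 0"
  by (simp add: vec_eq_iff)

lemma vec_sum_eq_0_iff_eq: "(v::'a^5) + w = 0 \<longleftrightarrow> v = w"
proof
  assume "v + w = 0"
  have "w = (v + v) + w" by simp
  also have "\<dots> = v + (v + w)" by (rule add.assoc)
  also have "\<dots> = v" using \<open>v + w = 0\<close> by simp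
  finally show "v = w" by simp
qed simp

lemma polar_self_eq_0 [simp]: "f x x = 0"
  using qform_add[of A x x] by simp

lemma ex_square_root: "\<exists>s. s^2 = (y::'a)"
proof -
  have "inj (\<lambda>s::'a. s^2)"
  proof (rule injI)
    fix s t :: 'a assume "s^2 = t^2"
    hence "(s + t)^2 = 0" by (simp add: power2_eq_square algebra_simps)
    thus "s = t" by (simp add: sum_eq_0_iff_eq)
  qed
  hence "surj (\<lambda>s::'a. s^2)" by (simp add: finite_UNIV_inj_surj)
  thus ?thesis by (metis surjD)
qed

lemma artin_schreier_add: "(x + y)^2 + (x + y) = (x^2 + x) + ((y::'a)^2 + y)"
  by (simp add: power2_eq_square algebra_simps)

lemma artin_schreier_eq_iff: "z^2 + z = w^2 + w \<longleftrightarrow> w = z \<or> w = (z::'a) + 1"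
proof -
  have "z^2 + z = w^2 + w \<longleftrightarrow> (z + w)^2 + (z + w) = 0"
    by (simp add: artin_schreier_add sum_eq_0_iff_eq)
  also have "\<dots> \<longleftrightarrow> (z + w) * ((z + w) + 1) = 0"
    by (simp add: power2_eq_square algebra_simps)
  also have "\<dots> \<longleftrightarrow> w = z \<or> w = z + 1"
    using add_self_cancel[of z w] add_self_cancel[of z "w + 1"]
    by (auto simp: sum_eq_0_iff_eq add.assoc)
  finally show ?thesis .
qed

lemma artin_schreier_image_add:
  "(x::'a) \<in> artin_schreier_image \<Longrightarrow> y \<in> artin_schreier_image \<Longrightarrow> x + y \<in> artin_schreier_image"
proof -
  assume "x \<in> artin_schreier_image" "y \<in> artin_schreier_image"
  then obtain z w where "x = z^2 + z" "y = w^2 + w" by (auto simp: artin_schreier_image_def)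
  hence "x + y = (z + w)^2 + (z + w)" unfolding artin_schreier_add by simp
  thus ?thesis by (simp add: artin_schreier_image_def)
qed

lemma card_artin_schreier_image: "CARD('a) = 2 * card (artin_schreier_image :: 'a set)"
proof -
  define s where "s = inv (\<lambda>z::'a. z^2 + z)"
  have s: "(s y)^2 + s y = y" if "y \<in> artin_schreier_image" for y
    using that unfolding artin_schreier_image_def s_def by (auto intro: f_inv_into_f)
  have inj: "inj_on (\<lambda>(y, b). s y + b) (artin_schreier_image \<times> {0, 1})"
  proof (intro inj_onI, clarify)
    fix y b y' b' :: 'a
    assume yy: "y \<in> artin_schreier_image" "y' \<in> artin_schreier_image" "b \<in> {0, 1}" "b' \<in> {0, 1}"
      and eq: "s y + b = s y' + b'"
    have "b^2 + b = 0" "b'^2 + b' = 0" using yy(3,4) by auto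
    moreover have "(s y + b)^2 + (s y + b) = (s y' + b')^2 + (s y' + b')" using eq by simp
    ultimately have "y = y'" unfolding artin_schreier_add s[OF yy(1)] s[OF yy(2)] by simp
    thus "y = y' \<and> b = b'" using eq by simp
  qed
  have "z \<in> (\<lambda>(y, b). s y + b) ` (artin_schreier_image \<times> {0, 1})" for z :: 'a
  proof (rule image_eqI)
    have img: "z^2 + z \<in> artin_schreier_image" by (simp add: artin_schreier_image_def)
    hence "s (z^2 + z) = z \<or> s (z^2 + z) = z + 1"
      using s[OF img] artin_schreier_eq_iff[of z "s (z^2 + z)"] by simp
    hence "z + s (z^2 + z) \<in> {0, 1}" by auto
    thus "(z^2 + z, z + s (z^2 + z)) \<in> artin_schreier_image \<times> {0, 1}" using img by simp
    show "z = (\<lambda>(y, b). s y + b) (z^2 + z, z + s (z^2 + z))"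
      by (simp add: add.left_commute)
  qed
  hence "bij_betw (\<lambda>(y, b). s y + b) (artin_schreier_image \<times> {0, 1}) UNIV"
    using inj by (auto simp: bij_betw_def)
  from bij_betw_same_card[OF this] show ?thesis
    by (simp add: card_cartesian_product)
qed

text \<open>The image of \<open>z \<mapsto> z\<^sup>2 + z\<close> is an additive subgroup of index two.\<close>

lemma artin_schreier_image_add_nonmembers:
  assumes "(x::'a) \<notin> artin_schreier_image" "y \<notin> artin_schreier_image"
  shows "x + y \<in> artin_schreier_image"
proof -
  let ?C = "(\<lambda>z. x + z) ` artin_schreier_image"
  have "card ?C = card (artin_schreier_image :: 'a set)" by (rule card_image) simp
  moreover have "?C \<inter> artin_schreier_image = {}"
    using assms(1) artin_schreier_image_add by fastforce
  ultimately have "card (?C \<union> artin_schreier_image) = CARD('a)"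
    using card_Un_disjoint[of ?C artin_schreier_image] card_artin_schreier_image by simp
  hence "?C \<union> artin_schreier_image = UNIV" by (intro card_subset_eq) auto
  then obtain z where "z \<in> artin_schreier_image" "y = x + z" using assms(2) by auto
  thus ?thesis by simp
qed

lemma quadratic_roots:
  assumes c: "c \<noteq> 0" and z: "c * z^2 + z + d = 0" and z0: "c * z0^2 + z0 + d = (0::'a)"
  shows "z = z0 \<or> z = z0 + 1 / c"
proof -
  have "c * (c * z^2 + z + d) = c * (c * z0^2 + z0 + d)" using z z0 by simp
  hence "(c * z)^2 + c * z + c * d = (c * z0)^2 + c * z0 + c * d"
    by (simp add: power2_eq_square algebra_simps)
  hence "(c * z)^2 + c * z = (c * z0)^2 + c * z0" by simp
  hence "c * z0 = c * z \<or> c * z0 = c * z + 1" by (simp add: artin_schreier_eq_iff)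
  thus ?thesis
  proof
    assume "c * z0 = c * z + 1"
    hence "c * z = c * z0 + 1" by (simp add: add.assoc)
    thus ?thesis using c by (simp add: field_simps)
  qed (use c in simp)
qed

lemma quadratic_other_root:
  assumes c: "c \<noteq> 0" and z0: "c * z0^2 + z0 + d = (0::'a)"
  shows "c * (z0 + 1 / c)^2 + (z0 + 1 / c) + d = 0"
proof -
  have "c * (z0 + 1 / c)^2 + (z0 + 1 / c) + d = (c * z0^2 + z0 + d) + (z0 + z0) + (1 / c + 1 / c)"
    using c by (simp add: field_simps power2_eq_square)
  thus ?thesis using z0 by simp
qed

end

section \<open>Geometry of a characteristic two quadratic form\<close>

context char2_form
begin

lemma hyperbolic_pair_complement:
  assumes S: "vec_subspace S" and e: "e1 \<in> S" "e2 \<in> S" "f e1 e2 = 1"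
  defines "S' \<equiv> {v\<in>{v\<in>S. f e1 v = 0}. f e2 v = 0}"
  shows "vec_subspace S'" and "card S = CARD('a)^2 * card S'"
    and "r \<in> S' \<Longrightarrow> \<forall>v\<in>S'. f r v = 0 \<Longrightarrow> \<forall>v\<in>S. f r v = 0"
proof -
  have S1: "vec_subspace {v\<in>S. f e1 v = 0}" by (rule vec_subspace_kernel[OF S linear_functional_polar])
  thus "vec_subspace S'" unfolding S'_def by (rule vec_subspace_kernel[OF _ linear_functional_polar])
  have "f e2 e1 = 1" using e(3) polar_commute by metis
  hence "card {v\<in>S. f e1 v = 0} = CARD('a) * card S'" unfolding S'_def
    using card_subspace_eq_card_kernel[OF S1 linear_functional_polar, of e1] e by simp
  thus "card S = CARD('a)^2 * card S'"
    using card_subspace_eq_card_kernel[OF S linear_functional_polar[of A e1] e(2)] e(3)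
    by (simp add: power2_eq_square)
  assume r: "r \<in> S'" "\<forall>v\<in>S'. f r v = 0"
  show "\<forall>v\<in>S. f r v = 0"
  proof
    fix v assume v: "v \<in> S"
    \<comment> \<open>project \<open>v\<close> to \<open>S'\<close> along the hyperbolic pair\<close>
    define w where "w = v + (f v e2) *s e1 + (f v e1) *s e2"
    have "w \<in> S'" using S v e \<open>f e2 e1 = 1\<close> unfolding S'_def w_def
      by (simp add: vec_subspace_def polar_add_right polar_smult_right polar_commute[of A _ v])
    hence "f r w = 0" using r by blast
    moreover have "f r w = f r v" unfolding w_def using r(1)
      by (simp add: S'_def polar_add_right polar_smult_right polar_commute[of A r])
    ultimately show "f r v = 0" by simp
  qed
qed

text \<open>This holds because the polar form is alternating in characteristic two.\<close>

lemma subspace_odd_dim_radical: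
  assumes "vec_subspace S" "card S = CARD('a)^(2*k+1)"
  shows "\<exists>r\<in>S. r \<noteq> 0 \<and> (\<forall>v\<in>S. f r v = 0)"
  using assms
proof (induction k arbitrary: S)
  case 0
  have "card S > 1" using 0 card_field_ge_2[where 'a='a] by simp
  then obtain r where r: "r \<in> S" "r \<noteq> 0" using card_gt_1_ex_nonzero by blast
  have "S = multiples r" using subspace_eq_multiples 0 r by simp
  hence "\<forall>v\<in>S. f r v = 0" by (auto simp: multiples_def polar_smult_right)
  thus ?case using r by blast
next
  case (Suc k)
  have "1 < CARD('a)^(2*Suc k+1)" using card_field_ge_2[where 'a='a] by (intro one_less_power) auto
  hence "card S > 1" using Suc.prems(2) by simp
  then obtain e1 where e1: "e1 \<in> S" "e1 \<noteq> 0" using card_gt_1_ex_nonzero by blast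
  show ?case
  proof (cases "\<forall>v\<in>S. f e1 v = 0")
    case False
    then obtain e where e: "e \<in> S" "f e1 e \<noteq> 0" by blast
    define e2 where "e2 = (1 / f e1 e) *s e"
    have e2: "e2 \<in> S" "f e1 e2 = 1"
      using Suc.prems e by (auto simp: e2_def vec_subspace_def polar_smult_right)
    note S' = hyperbolic_pair_complement[OF Suc.prems(1) e1(1) e2]
    have "CARD('a)^(2*Suc k+1) = CARD('a)^2 * CARD('a)^(2*k+1)" by (simp flip: power_add)
    hence "CARD('a)^2 * card {v\<in>{v\<in>S. f e1 v = 0}. f e2 v = 0} = CARD('a)^2 * CARD('a)^(2*k+1)"
      using S'(2) Suc.prems(2) by metis
    hence "card {v\<in>{v\<in>S. f e1 v = 0}. f e2 v = 0} = CARD('a)^(2*k+1)"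
      using mult_left_cancel[of "CARD('a)^2"] by simp
    then obtain r where "r \<in> {v\<in>{v\<in>S. f e1 v = 0}. f e2 v = 0}" "r \<noteq> 0"
      "\<forall>v\<in>{v\<in>{v\<in>S. f e1 v = 0}. f e2 v = 0}. f r v = 0"
      using Suc.IH S'(1) by blast
    thus ?thesis using S'(3) by blast
  qed (use e1 in blast)
qed

lemma elliptic_solid_singular_perp_imp_multiple:
  assumes "elliptic_solid A h" "x \<noteq> 0" "lin h x = 0" "lin h y = 0" "Q x = 0" "Q y = 0" "f x y = 0"
  shows "\<exists>c. y = c *s x"
proof (rule ccontr)
  assume "\<not> ?thesis"
  hence "lin_indep2 x y" using lin_indep2_if_not_multiple assms(2) by blast
  moreover have "\<forall>a b. Q (vadd (vsmult a x) (vsmult b y)) = 0"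
    using assms by (simp add: vadd_eq_plus vsmult_eq_smult qform_lincomb)
  ultimately show False using assms(1,3,4) unfolding elliptic_solid_def by blast
qed

text \<open>The line through a singular \<open>x\<close> and a non-perpendicular \<open>w\<close> meets the quadric again.\<close>

lemma singular_second_point:
  assumes "Q x = 0" "f x w \<noteq> 0"
  shows "Q ((Q w / f x w) *s x + w) = 0" "f x ((Q w / f x w) *s x + w) = f x w"
  using assms by (simp_all add: qform_add qform_smult polar_smult_left polar_smult_right polar_add_right)

lemma elliptic_solid_ex_nonperp_singular:
  assumes E: "elliptic_solid A h" and x: "x \<noteq> 0" "Q x = 0" "lin h x = 0"
  shows "\<exists>z. z \<noteq> 0 \<and> Q z = 0 \<and> lin h z = 0 \<and> f x z \<noteq> 0"
proof -
  obtain w where w: "lin h w = 0" "f x w \<noteq> 0" using E x unfolding elliptic_solid_def by blast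
  define z where "z = (Q w / f x w) *s x + w"
  have "Q z = 0" "f x z = f x w" using singular_second_point[OF x(2) w(2)] by (simp_all add: z_def)
  moreover have "lin h z = 0" using x w by (simp add: z_def lin_add lin_smult)
  ultimately show ?thesis using w(2) by (intro exI[of _ z]) auto
qed

lemma elliptic_solid_transfer:
  fixes T :: "'a^5 \<Rightarrow> 'a^5"
  assumes E: "elliptic_solid A h"
    and T_add: "\<And>x y. T (x + y) = T x + T y" and T_smult: "\<And>c x. T (c *s x) = c *s T x"
    and T_T: "\<And>x. T (T x) = x" and Q_T: "\<And>x. Q (T x) = Q x"
    and lin_T: "\<And>v. lin h (T v) = lin h' v" and lin'_T: "\<And>v. lin h' (T v) = lin h v"
  shows "elliptic_solid A h'"
proof -
  have T_0: "T 0 = 0" using T_smult[of 0 0] by simp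
  have f_T: "f (T x) (T y) = f x y" for x y
    using Q_T[of "x + y"] unfolding T_add by (simp add: qform_add Q_T)
  have "h \<noteq> 0" using E by (simp add: elliptic_solid_def)
  hence "h' \<noteq> 0" using lin'_T lin_eq_0_iff by metis
  moreover have "\<exists>w. lin h' w = 0 \<and> f v w \<noteq> 0" if v: "v \<noteq> 0" "lin h' v = 0" "Q v = 0" for v
  proof -
    have "T v \<noteq> 0" "lin h (T v) = 0" "Q (T v) = 0" using v T_T[of v] T_0 lin_T Q_T by auto
    then obtain w where w: "lin h w = 0" "f (T v) w \<noteq> 0" using E unfolding elliptic_solid_def by blast
    have "lin h' (T w) = 0" "f v (T w) \<noteq> 0" using w lin'_T f_T[of "T v" w] T_T by auto
    thus ?thesis by blast
  qed
  moreover have "\<not> (lin_indep2 u w \<and> lin h' u = 0 \<and> lin h' w = 0 \<and>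
           (\<forall>a b. Q (vadd (vsmult a u) (vsmult b w)) = 0))" for u w
  proof
    assume uw: "lin_indep2 u w \<and> lin h' u = 0 \<and> lin h' w = 0 \<and> (\<forall>a b. Q (vadd (vsmult a u) (vsmult b w)) = 0)"
    have "lin_indep2 (T u) (T w)"
      using uw T_T[of "_ *s u + _ *s w"] T_0
      unfolding lin_indep2_def vadd_eq_plus vsmult_eq_smult by (metis T_add T_smult)
    moreover have "\<forall>a b. Q (vadd (vsmult a (T u)) (vsmult b (T w))) = 0"
      using uw by (simp add: vadd_eq_plus vsmult_eq_smult T_add[symmetric] T_smult[symmetric] Q_T)
    ultimately show False using E uw lin_T unfolding elliptic_solid_def by metis
  qed
  ultimately show ?thesis unfolding elliptic_solid_def by blast
qed

lemma tangent_solid_sections_perp: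
  assumes T: "tangent (solid_section A h) (solid_section A k)"
    and x: "x \<noteq> 0" "pt x \<in> solid_section A h" "pt x \<in> solid_section A k"
    and v: "lin h v = 0" "lin k v = 0"
  shows "f x v = 0"
proof (rule ccontr)
  assume fv: "f x v \<noteq> 0"
  have meet: "solid_section A h \<inter> solid_section A k = {pt x}" using T x unfolding tangent_def by auto
  have hx: "Q x = 0" "lin h x = 0" "lin k x = 0" using x pt_in_solid_section_iff by blast+
  define z where "z = (Q v / f x v) *s x + v"
  have z: "Q z = 0" "f x z = f x v" using singular_second_point[OF hx(1) fv] by (simp_all add: z_def)
  have "z \<noteq> 0" using z fv by auto
  moreover have "lin h z = 0" "lin k z = 0" using hx v by (simp_all add: z_def lin_add lin_smult)
  ultimately have "pt z = pt x" using meet z pt_in_solid_section_iff by blast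
  then obtain c where "z = c *s x" using pt_eqD by blast
  thus False using z fv by (simp add: polar_smult_right)
qed

lemma tangent_solid_sectionsI:
  assumes E: "elliptic_solid A k" and x: "x \<noteq> 0" "Q x = 0" "lin h x = 0" "lin k x = 0"
    and perp: "\<And>v. lin h v = 0 \<Longrightarrow> lin k v = 0 \<Longrightarrow> f x v = 0"
  shows "tangent (solid_section A h) (solid_section A k)"
proof -
  have "X = pt x" if "X \<in> solid_section A h \<inter> solid_section A k" for X
  proof -
    from that have "X \<in> solid_section A h" by blast
    then obtain v where v: "v \<noteq> 0" "X = pt v" "Q v = 0" "lin h v = 0"
      by (rule solid_sectionE)
    hence "lin k v = 0" using that pt_in_solid_section_iff by blast
    then obtain c where "v = c *s x"
      using elliptic_solid_singular_perp_imp_multiple[OF E x(1,4)] x(2) v perp by blast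
    thus ?thesis using v pt_eqI[of c v x] by auto
  qed
  hence meet: "solid_section A h \<inter> solid_section A k = {pt x}"
    using x pt_in_solid_section_iff by blast
  obtain z where z: "z \<noteq> 0" "Q z = 0" "lin k z = 0" "f x z \<noteq> 0"
    using elliptic_solid_ex_nonperp_singular[OF E x(1,2,4)] by blast
  have "pt z \<notin> solid_section A h"
  proof
    assume "pt z \<in> solid_section A h"
    hence "pt z = pt x" using meet z pt_in_solid_section_iff by blast
    then obtain c where "z = c *s x" using pt_eqD by blast
    thus False using z(4) by (simp add: polar_smult_right)
  qed
  hence "solid_section A h \<noteq> solid_section A k" using z pt_in_solid_section_iff by blast
  thus ?thesis using meet unfolding tangent_def by blast
qed

text \<open>\<open>Q u1 \<cdot> Q u2\<close> is the Arf invariant of the anisotropic binary form on \<open>U\<close>.\<close>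

lemma anisotropic_line_basis:
  assumes U: "vec_subspace U" "card U = CARD('a)^2"
    and aniso: "\<And>v. v \<in> U \<Longrightarrow> Q v = 0 \<Longrightarrow> v = 0"
  obtains u1 u2 where "u1 \<in> U" "u2 \<in> U" "f u1 u2 = 1" "Q u1 \<noteq> 0"
    "Q u1 * Q u2 \<notin> artin_schreier_image"
proof -
  have q2: "CARD('a) \<ge> 2" by (rule card_field_ge_2)
  have "1 < CARD('a)^2" using q2 by (intro one_less_power) auto
  hence "card U > 1" using U(2) by simp
  then obtain u1 where u1: "u1 \<in> U" "u1 \<noteq> 0" using card_gt_1_ex_nonzero by blast
  have Qu1: "Q u1 \<noteq> 0" using aniso u1 by blast
  have "card U > CARD('a)" using U q2 by (simp add: power2_eq_square)
  then obtain u where u: "u \<in> U" "u \<notin> multiples u1" using card_gt_ex_not_multiple u1(2) by blast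
  have "f u1 u \<noteq> 0"
  proof
    assume perp: "f u1 u = 0"
    \<comment> \<open>then \<open>Q\<close> would be the square of a linear form on \<open>U\<close>, with a nontrivial zero\<close>
    obtain s1 s2 where s: "s1^2 = Q u" "s2^2 = Q u1" using ex_square_root by metis
    have "Q (s1 *s u1 + s2 *s u) = 0" using perp s by (simp add: qform_lincomb mult.commute)
    moreover have "s1 *s u1 + s2 *s u \<in> U" using U(1) u1 u by (simp add: vec_subspace_lincomb)
    ultimately have "s2 *s u = s1 *s u1" using aniso vec_sum_eq_0_iff_eq by (metis add.commute)
    moreover have "s2 \<noteq> 0" using s Qu1 by auto
    ultimately have "u = (s1 / s2) *s u1" by (metis vector_smult_assoc vector_mul_lcancel
          nonzero_divide_eq_eq divide_inverse mult.commute)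
    thus False using u(2) by (auto simp: multiples_def)
  qed
  define u2 where "u2 = (1 / f u1 u) *s u"
  have u2: "u2 \<in> U" "f u1 u2 = 1"
    using U(1) u \<open>f u1 u \<noteq> 0\<close> by (simp_all add: u2_def vec_subspace_def polar_smult_right)
  have "Q u1 * Q u2 \<notin> artin_schreier_image"
  proof
    assume "Q u1 * Q u2 \<in> artin_schreier_image"
    then obtain z where z: "Q u1 * Q u2 = z^2 + z" by (auto simp: artin_schreier_image_def)
    define v where "v = (z / Q u1) *s u1 + 1 *s u2"
    have "Q v = (z / Q u1)^2 * Q u1 + 1^2 * Q u2 + (z / Q u1) * 1 * f u1 u2"
      unfolding v_def by (rule qform_lincomb)
    hence "Q v = (z^2 + z) / Q u1 + Q u2"
      using Qu1 by (simp add: u2 field_simps power2_eq_square)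
    hence "Q v = 0" using z Qu1 by (simp add: field_simps)
    moreover have "v \<in> U" unfolding v_def using U(1) u1(1) u2(1) by (rule vec_subspace_lincomb)
    ultimately have "v = 0" using aniso by blast
    hence "f u1 v = 0" by simp
    moreover have "f u1 v = 1" by (simp add: v_def polar_add_right polar_smult_right u2)
    ultimately show False by simp
  qed
  thus ?thesis using that u1 u2 Qu1 by blast
qed

lemma arf_identity:
  fixes a b c d r al be la :: 'a
  assumes d: "d \<noteq> 0" and al: "al \<noteq> 0" and la: "la^2 = al / d" and r: "r^2 + r = d * c + al * be"
  shows "al * (la * (d * a + r * b) / al)^2 + be * (la * b)^2 + (la * (d * a + r * b) / al) * (la * b)
    = a^2 * d + b^2 * c + a * b"
proof -
  have "al * (la * (d * a + r * b) / al)^2 + be * (la * b)^2 + (la * (d * a + r * b) / al) * (la * b)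
      = (la^2 / al) * ((d * a + r * b)^2 + al * be * b^2 + b * (d * a + r * b))"
    using al by (simp add: field_simps power2_eq_square)
  also have "la^2 / al = 1 / d" using la al d by (simp add: field_simps)
  also have "(d * a + r * b)^2 = d^2 * a^2 + r^2 * b^2"
    by (simp add: power2_eq_square algebra_simps)
  also have "r^2 = (r^2 + r) + r" by (simp add: add.assoc)
  also have "\<dots> = d * c + al * be + r" using r by simp
  also have "(1 / d) * (d^2 * a^2 + (d * c + al * be + r) * b^2 + al * be * b^2 + b * (d * a + r * b))
      = (1 / d) * (d * (a^2 * d + b^2 * c + a * b))"
    by (simp add: algebra_simps power2_eq_square)
  finally show ?thesis using d by simp
qed

text \<open>The Arf invariants \<open>Q p \<cdot> Q y\<close> and \<open>Q u1 \<cdot> Q u2\<close> of the two orthogonal binary forms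
  cancel, so their orthogonal sum is hyperbolic.\<close>

lemma orthogonal_sum_totally_singular_line:
  assumes orth: "f p u1 = 0" "f p u2 = 0" "f y u1 = 0" "f y u2 = 0"
    and hyp: "f p y = 1" "f u1 u2 = 1" and nonzero: "Q p \<noteq> 0" "Q u1 \<noteq> 0"
    and arf: "Q p * Q y + Q u1 * Q u2 \<in> artin_schreier_image"
  obtains s1 s2 s3 where "\<And>a b. Q (a *s (p + s1 *s u1) + b *s (y + s2 *s u1 + s3 *s u2)) = 0"
proof -
  obtain r where r: "r^2 + r = Q p * Q y + Q u1 * Q u2" using arf by (auto simp: artin_schreier_image_def)
  obtain la where la: "la^2 = Q u1 / Q p" using ex_square_root by blast
  have "Q (a *s (p + (la * Q p / Q u1) *s u1) + b *s (y + (la * r / Q u1) *s u1 + la *s u2)) = 0"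
    for a b
  proof -
    define p1 where "p1 = la * (Q p * a + r * b) / Q u1"
    define p2 where "p2 = la * b"
    have split: "a *s (p + (la * Q p / Q u1) *s u1) + b *s (y + (la * r / Q u1) *s u1 + la *s u2)
        = (a *s p + b *s y) + (p1 *s u1 + p2 *s u2)"
      by (simp add: p1_def p2_def vec_eq_iff algebra_simps add_divide_distrib)
    have "f (a *s p + b *s y) (p1 *s u1 + p2 *s u2) = 0"
      by (simp add: polar_add_left polar_add_right polar_smult_left polar_smult_right orth)
    moreover have "Q (a *s p + b *s y) = a^2 * Q p + b^2 * Q y + a * b"
      by (simp add: qform_lincomb hyp)
    moreover have "Q (p1 *s u1 + p2 *s u2) = a^2 * Q p + b^2 * Q y + a * b"
      unfolding qform_lincomb hyp p1_def p2_def using arf_identity[OF nonzero(1,2) la r]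
      by (simp add: mult.commute)
    ultimately show ?thesis unfolding split qform_add by simp
  qed
  thus ?thesis using that by blast
qed

end

section \<open>The nucleus of a parabolic quadric\<close>

locale parabolic_form = char2_form +
  assumes parabolic: "parabolic A"
begin

definition nucleus :: "'a^5" where
  "nucleus = (SOME N. N \<noteq> 0 \<and> (\<forall>v. f N v = 0))"

lemma nucleus: "nucleus \<noteq> 0" "f nucleus v = 0" "f v nucleus = 0"
proof -
  have "card (UNIV::('a^5) set) = CARD('a)^(2*2+1)" by simp
  hence "\<exists>N. N \<noteq> 0 \<and> (\<forall>v. f N v = 0)" using subspace_odd_dim_radical[OF vec_subspace_UNIV] by blast
  hence "nucleus \<noteq> 0 \<and> (\<forall>v. f nucleus v = 0)" unfolding nucleus_def by (rule someI_ex)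
  thus "nucleus \<noteq> 0" "f nucleus v = 0" "f v nucleus = 0" using polar_commute[of A v] by auto
qed

lemma qform_nucleus_neq_0: "Q nucleus \<noteq> 0"
  using parabolic nucleus unfolding parabolic_def by blast

lemma singular_shift_by_nucleus:
  assumes "\<forall>g. u \<noteq> g *s nucleus"
  shows "\<exists>s. Q (u + s *s nucleus) = 0 \<and> u + s *s nucleus \<noteq> 0"
proof -
  obtain s where s: "s^2 = Q u / Q nucleus" using ex_square_root by blast
  have "Q (u + s *s nucleus) = Q u + s^2 * Q nucleus"
    by (simp add: qform_add qform_smult polar_smult_right nucleus)
  hence "Q (u + s *s nucleus) = 0" using s qform_nucleus_neq_0 by simp
  moreover have "u + s *s nucleus \<noteq> 0" using assms vec_sum_eq_0_iff_eq by blast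
  ultimately show ?thesis by blast
qed

lemma radical_multiple_nucleus:
  assumes "\<forall>v. f r v = 0" shows "\<exists>g. r = g *s nucleus"
proof (rule ccontr)
  assume "\<not> ?thesis"
  then obtain s where s: "Q (r + s *s nucleus) = 0" "r + s *s nucleus \<noteq> 0"
    using singular_shift_by_nucleus by blast
  moreover have "\<forall>w. f (r + s *s nucleus) w = 0"
    using assms by (simp add: polar_add_left polar_smult_left nucleus)
  ultimately show False using parabolic unfolding parabolic_def by blast
qed

lemma subspace_ex_singular:
  assumes "vec_subspace S" "nucleus \<in> S" "card S > CARD('a)"
  shows "\<exists>y\<in>S. y \<noteq> 0 \<and> Q y = 0"
proof -
  obtain u where u: "u \<in> S" "u \<notin> multiples nucleus"
    using card_gt_ex_not_multiple[OF assms(3) nucleus(1)] by blast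
  have "\<forall>g. u \<noteq> g *s nucleus" using u(2) by (auto simp: multiples_def)
  then obtain s where "Q (u + s *s nucleus) = 0" "u + s *s nucleus \<noteq> 0"
    using singular_shift_by_nucleus by blast
  moreover have "u + s *s nucleus \<in> S" using assms(1,2) u(1) by (simp add: vec_subspace_def)
  ultimately show ?thesis by blast
qed

lemma elliptic_solid_nucleus: assumes E: "elliptic_solid A h" shows "lin h nucleus \<noteq> 0"
proof
  assume hN: "lin h nucleus = 0"
  define S where "S = {v. lin h v = 0}"
  have S: "vec_subspace S" "nucleus \<in> S" unfolding S_def
    using vec_subspace_kernel[OF vec_subspace_UNIV linear_functional_lin] hN by auto
  have "h \<noteq> 0" using E by (simp add: elliptic_solid_def)
  hence card_S: "card S = CARD('a)^Suc (Suc 2)" unfolding S_def using card_kernel_lin by simp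
  have q2: "CARD('a) \<ge> 2" by (rule card_field_ge_2)
  have "CARD('a)^1 < CARD('a)^Suc (Suc 2)" using q2 by (intro power_strict_increasing) auto
  then obtain y where y: "y \<in> S" "y \<noteq> 0" "Q y = 0" using subspace_ex_singular[OF S] card_S by auto
  obtain z where z: "Q z = 0" "z \<in> S" "f y z \<noteq> 0"
    using elliptic_solid_ex_nonperp_singular[OF E y(2,3)] y(1) by (auto simp: S_def)
  \<comment> \<open>The plane of the solid orthogonal to \<open>y\<close> and \<open>z\<close> contains the nucleus, hence a further singular point.\<close>
  define S1 where "S1 = {v\<in>S. f y v = 0}"
  define U where "U = {v\<in>S1. f z v = 0}"
  have S1: "vec_subspace S1" "card S1 = CARD('a)^Suc 2" unfolding S1_def
    using vec_subspace_kernel[OF S(1) linear_functional_polar] card_kernel_eq_power[OF S(1)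
        linear_functional_polar z(2,3) card_S] by auto
  have "y \<in> S1" "f z y \<noteq> 0" using y z polar_commute[of A z y] by (auto simp: S1_def)
  hence U: "vec_subspace U" "card U = CARD('a)^2" unfolding U_def
    using vec_subspace_kernel[OF S1(1) linear_functional_polar] card_kernel_eq_power[OF S1(1)
        linear_functional_polar _ _ S1(2)] by auto
  have "nucleus \<in> U" using S(2) by (simp add: U_def S1_def nucleus)
  moreover have "CARD('a) < CARD('a)^2" using q2 by (simp add: power2_eq_square)
  ultimately obtain y' where y': "y' \<in> U" "y' \<noteq> 0" "Q y' = 0"
    using subspace_ex_singular[OF U(1)] U(2) by auto
  have "lin h y' = 0" "f y y' = 0" "f z y' = 0" using y'(1) by (auto simp: U_def S1_def S_def)
  then obtain k where "y' = k *s y"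
    using elliptic_solid_singular_perp_imp_multiple[OF E y(2)] y y'(3) by (auto simp: S_def)
  hence "k * f z y = 0" using \<open>f z y' = 0\<close> by (simp add: polar_smult_right)
  thus False using \<open>y' = k *s y\<close> y'(2) \<open>f z y \<noteq> 0\<close> by simp
qed

lemma elliptic_solid_normalize:
  assumes E: "elliptic_solid A g"
  obtains h where "elliptic_solid A h" "solid_section A h = solid_section A g" "lin h nucleus = 1"
proof -
  define h where "h = (1 / lin g nucleus) *s g"
  have "lin h v = 0 \<longleftrightarrow> lin g v = 0" for v
    using elliptic_solid_nucleus[OF E] by (simp add: h_def lin_smult_coeffs)
  thus ?thesis using that solid_section_cong elliptic_solid_cong E elliptic_solid_nucleus[OF E]
    by (metis h_def lin_smult_coeffs nonzero_divide_eq_eq)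
qed

end

section \<open>Two elliptic ovoids meeting in a conic\<close>

locale ovoid_pair = parabolic_form +
  fixes h1 h2 :: "'a^5"
  assumes elliptic1: "elliptic_solid A h1" and elliptic2: "elliptic_solid A h2"
    and nucleus1: "lin h1 nucleus = 1" and nucleus2: "lin h2 nucleus = 1"
    and distinct: "solid_section A h1 \<noteq> solid_section A h2"
    and conic: "nondeg_conic A (solid_section A h1 \<inter> solid_section A h2)"
begin

definition plane :: "('a^5) set" where
  "plane = {v. lin h1 v = 0 \<and> lin h2 v = 0}"

lemma vec_subspace_plane: "vec_subspace plane"
  using vec_subspace_kernel[OF vec_subspace_kernel[OF vec_subspace_UNIV linear_functional_lin]
      linear_functional_lin, of h1 h2]
  by (simp add: plane_def)

lemma card_plane: "card plane = CARD('a)^3"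
proof -
  obtain e where e: "lin h1 e = 0" "lin h2 e \<noteq> 0"
  proof (rule ccontr)
    assume "\<not> thesis"
    hence "\<forall>v. lin h1 v = 0 \<longrightarrow> lin h2 v = 0" using that by blast
    then obtain a where a: "\<forall>v. lin h2 v = a * lin h1 v"
      using linear_functional_kernel_subset_imp_multiple[OF linear_functional_lin linear_functional_lin] by blast
    hence "a = 1" using a[rule_format, of nucleus] nucleus1 nucleus2 by simp
    hence "solid_section A h2 = solid_section A h1" using a by (intro solid_section_cong) simp
    thus False using distinct by simp
  qed
  have "h1 \<noteq> 0" using elliptic1 by (simp add: elliptic_solid_def)
  hence "card {v\<in>UNIV. lin h1 v = 0} = CARD('a)^Suc 3" using card_kernel_lin by simp
  thus ?thesis unfolding plane_def
    using card_kernel_eq_power[OF vec_subspace_kernel[OF vec_subspace_UNIV linear_functional_lin]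
        linear_functional_lin, of e h1 h2 3] e by simp
qed

text \<open>The pole of the plane: the vector whose polar functional is \<open>lin h1 + lin h2\<close>.
  It exists because the polar form is degenerate on the 3-dimensional plane.\<close>

lemma ex_pole: "\<exists>l. l \<noteq> 0 \<and> l \<in> plane \<and> (\<forall>v. f l v = lin h1 v + lin h2 v)"
proof -
  obtain r where r: "r \<in> plane" "r \<noteq> 0" "\<forall>v\<in>plane. f r v = 0"
    using subspace_odd_dim_radical[OF vec_subspace_plane, of 1] card_plane by auto
  obtain a b where ab: "\<forall>v. f r v = a * lin h1 v + b * lin h2 v"
    using linear_functional_kernel_subset_imp_lincomb[OF linear_functional_lin linear_functional_lin
        linear_functional_polar] r(3) by (fastforce simp: plane_def)
  have "b = a" using ab[rule_format, of nucleus] nucleus1 nucleus2 nucleus by (simp add: sum_eq_0_iff_eq)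
  have "a \<noteq> 0"
  proof
    assume "a = 0"
    then obtain g where g: "r = g *s nucleus" using ab \<open>b = a\<close> radical_multiple_nucleus by auto
    hence "g = 0" using r(1) nucleus1 by (simp add: plane_def lin_smult)
    thus False using g r(2) by simp
  qed
  hence "(1 / a) *s r \<noteq> 0 \<and> (1 / a) *s r \<in> plane \<and> (\<forall>v. f ((1 / a) *s r) v = lin h1 v + lin h2 v)"
    using r ab \<open>b = a\<close> by (simp add: plane_def lin_smult polar_smult_left field_simps)
  thus ?thesis by blast
qed

definition pole :: "'a^5" where
  "pole = (SOME l. l \<noteq> 0 \<and> l \<in> plane \<and> (\<forall>v. f l v = lin h1 v + lin h2 v))"

lemma pole: "pole \<noteq> 0" "lin h1 pole = 0" "lin h2 pole = 0" "f pole v = lin h1 v + lin h2 v"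
proof -
  have "pole \<noteq> 0 \<and> pole \<in> plane \<and> (\<forall>v. f pole v = lin h1 v + lin h2 v)"
    unfolding pole_def by (rule someI_ex[OF ex_pole])
  thus "pole \<noteq> 0" "lin h1 pole = 0" "lin h2 pole = 0" "f pole v = lin h1 v + lin h2 v"
    by (auto simp: plane_def)
qed

text \<open>Non-degeneracy of the conic \<open>X1 \<inter> X2\<close> is used exactly here.\<close>

lemma qform_pole_neq_0: "Q pole \<noteq> 0"
proof
  assume Q_pole: "Q pole = 0"
  obtain k1 k2 where k: "solid_section A h1 \<inter> solid_section A h2 =
      {pt v | v. v \<noteq> 0 \<and> Q v = 0 \<and> lin k1 v = 0 \<and> lin k2 v = 0}"
    and nondeg: "\<forall>v. v \<noteq> 0 \<and> lin k1 v = 0 \<and> lin k2 v = 0 \<and> Q v = 0 \<longrightarrow>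
        (\<exists>w. lin k1 w = 0 \<and> lin k2 w = 0 \<and> f v w \<noteq> 0)"
    using conic unfolding nondeg_conic_def by blast
  have "pt pole \<in> solid_section A h1 \<inter> solid_section A h2"
    using pole Q_pole pt_in_solid_section_iff by blast
  then obtain u c where u: "u \<noteq> 0" "Q u = 0" "lin k1 u = 0" "lin k2 u = 0" "pole = c *s u"
    unfolding k by (auto dest: pt_eqD)
  hence k_pole: "lin k1 pole = 0" "lin k2 pole = 0" by (simp_all add: lin_smult)
  then obtain w where w: "lin k1 w = 0" "lin k2 w = 0" "f pole w \<noteq> 0"
    using nondeg pole(1) Q_pole by blast
  \<comment> \<open>a second point of the conic, not orthogonal to the pole: impossible, as the pole is orthogonal to the plane\<close>
  define z where "z = (Q w / f pole w) *s pole + w"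
  have z: "Q z = 0" "f pole z = f pole w" using singular_second_point[OF Q_pole w(3)] by (simp_all add: z_def)
  hence "z \<noteq> 0" using w(3) by auto
  moreover have "lin k1 z = 0" "lin k2 z = 0" using k_pole w by (simp_all add: z_def lin_add lin_smult)
  ultimately have "pt z \<in> solid_section A h1 \<inter> solid_section A h2" unfolding k using z by blast
  hence "lin h1 z = 0" "lin h2 z = 0" using pt_in_solid_section_iff[OF \<open>z \<noteq> 0\<close>] by auto
  thus False using z w(3) pole(4) by simp
qed

definition tangency_quadratic :: "'a \<Rightarrow> 'a" where
  "tangency_quadratic z = Q nucleus * z^2 + z + Q pole"

lemma arf_pole_if_no_root:
  assumes "\<nexists>z. tangency_quadratic z = 0"
  shows "Q pole * Q nucleus \<notin> artin_schreier_image"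
proof
  assume "Q pole * Q nucleus \<in> artin_schreier_image"
  then obtain z where z: "Q pole * Q nucleus = z^2 + z" by (auto simp: artin_schreier_image_def)
  have "tangency_quadratic (z / Q nucleus) = (z^2 + z) / Q nucleus + Q pole"
    using qform_nucleus_neq_0 by (simp add: tangency_quadratic_def field_simps power2_eq_square)
  also have "\<dots> = 0" using z qform_nucleus_neq_0 by (simp add: field_simps)
  finally show False using assms by blast
qed

end

locale ovoid_pair_point = ovoid_pair +
  fixes x0 :: "'a^5"
  assumes point: "x0 \<noteq> 0" "Q x0 = 0" "lin h1 x0 = 0"
begin

definition polar_vector :: "'a^5" where
  "polar_vector = (SOME g. \<forall>v. lin g v = f x0 v)"

lemma lin_polar_vector: "lin polar_vector v = f x0 v"
  using someI_ex[OF ex_lin_eq_polar[of A x0]] unfolding polar_vector_def by blast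

text \<open>\<open>pencil_solid a\<close> runs through the solids containing the tangent plane of \<open>X1\<close> at \<open>x0\<close>,
  except the tangent solid \<open>x0\<^sup>\<bottom>\<close>.\<close>

definition pencil_solid :: "'a \<Rightarrow> 'a^5" where
  "pencil_solid a = h1 + a *s polar_vector"

text \<open>Where \<open>pencil_solid a\<close> touches \<open>X2\<close>, when it does.\<close>

definition contact_point :: "'a \<Rightarrow> 'a^5" where
  "contact_point a = (a *s x0 + pole) + (a * lin h2 x0) *s nucleus"

lemma lin_pencil_solid: "lin (pencil_solid a) v = lin h1 v + a * f x0 v"
  by (simp add: pencil_solid_def lin_add_coeffs lin_smult_coeffs lin_polar_vector)

lemma polar_point_pole: "f x0 pole = lin h2 x0"
  using pole(4)[of x0] point(3) polar_commute[of A x0] by simp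

lemma qform_contact_point: "Q (contact_point a) = tangency_quadratic (a * lin h2 x0)"
  by (simp add: contact_point_def tangency_quadratic_def qform_add qform_smult polar_add_left
      polar_add_right polar_smult_left polar_smult_right nucleus point polar_point_pole
      algebra_simps power2_eq_square)

lemma polar_contact_point: "f (contact_point a) v = lin (pencil_solid a) v + lin h2 v"
  by (simp add: contact_point_def polar_add_left polar_smult_left nucleus pole lin_pencil_solid add.assoc)

lemma lin_contact_point:
  "lin (pencil_solid a) (contact_point a) = 0" "lin h2 (contact_point a) = 0"
  "lin h1 (contact_point a) = a * lin h2 x0"
  by (simp_all add: contact_point_def lin_pencil_solid lin_add lin_smult polar_add_right
      polar_smult_right nucleus point pole polar_point_pole nucleus1 nucleus2)

lemma lin_pencil_solid_nucleus: "lin (pencil_solid a) nucleus = 1"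
  by (simp add: lin_pencil_solid nucleus1 nucleus)

lemma pencil_solid_tangent:
  assumes a: "a \<noteq> 0" and root: "tangency_quadratic (a * lin h2 x0) = 0"
  shows "elliptic_solid A (pencil_solid a)" "pt x0 \<in> solid_section A (pencil_solid a)"
    "tangent (solid_section A (pencil_solid a)) (solid_section A h1)"
    "tangent (solid_section A (pencil_solid a)) (solid_section A h2)"
proof -
  \<comment> \<open>\<open>T\<close> is an involutory isometry of \<open>Q\<close> fixing \<open>x0\<^sup>\<bottom>\<close> pointwise and exchanging the solids \<open>h1\<close> and \<open>pencil_solid a\<close>.\<close>
  define m where "m = (Q nucleus * a^2) *s x0 + a *s nucleus"
  define T where "T v = v + f x0 v *s m" for v
  have f_m: "f x0 m = 0" "f v m = Q nucleus * a^2 * f x0 v" for v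
    by (simp_all add: m_def polar_add_right polar_smult_right nucleus polar_commute[of A v x0])
  have Q_m: "Q m = a^2 * Q nucleus"
    by (simp add: m_def qform_add qform_smult polar_smult_left polar_smult_right point nucleus)
  show "elliptic_solid A (pencil_solid a)"
  proof (rule elliptic_solid_transfer[OF elliptic1, of T])
    show "T (x + y) = T x + T y" "T (c *s x) = c *s T x" for c x y
      by (simp_all add: T_def polar_add_right polar_smult_right algebra_simps vec_eq_iff)
    show "T (T x) = x" for x
      by (simp add: T_def polar_add_right polar_smult_right f_m add.assoc)
    show "Q (T x) = Q x" for x
      by (simp add: T_def qform_add qform_smult polar_smult_right Q_m f_m power2_eq_square algebra_simps)
    show "lin h1 (T v) = lin (pencil_solid a) v" "lin (pencil_solid a) (T v) = lin h1 v" for v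
      by (simp_all add: T_def lin_add lin_smult m_def point nucleus1 lin_pencil_solid polar_add_right
          polar_smult_right f_m nucleus mult.commute)
  qed
  have x0: "lin (pencil_solid a) x0 = 0" by (simp add: lin_pencil_solid point)
  thus "pt x0 \<in> solid_section A (pencil_solid a)" using pt_in_solid_section_iff point by blast
  show "tangent (solid_section A (pencil_solid a)) (solid_section A h1)"
    using tangent_solid_sectionsI[OF elliptic1 point(1,2) x0 point(3)] a
    by (simp add: lin_pencil_solid)
  have "a * lin h2 x0 \<noteq> 0" using root qform_pole_neq_0 by (auto simp: tangency_quadratic_def)
  hence "contact_point a \<noteq> 0" by (metis lin_contact_point(3) lin_zero(1))
  thus "tangent (solid_section A (pencil_solid a)) (solid_section A h2)"
    using tangent_solid_sectionsI[OF elliptic2 _ _ lin_contact_point(1,2)]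
    by (simp add: qform_contact_point root polar_contact_point)
qed

lemma tangent_solid_in_pencil:
  assumes E: "elliptic_solid A h" and x0: "pt x0 \<in> solid_section A h"
    and T1: "tangent (solid_section A h) (solid_section A h1)"
  obtains a where "a \<noteq> 0" "solid_section A h = solid_section A (pencil_solid a)"
proof -
  have hx: "lin h x0 = 0" using x0 pt_in_solid_section_iff point by blast
  have x1: "pt x0 \<in> solid_section A h1" using pt_in_solid_section_iff point by blast
  obtain \<alpha> \<beta> where ab: "\<forall>v. f x0 v = \<alpha> * lin h v + \<beta> * lin h1 v"
    using linear_functional_kernel_subset_imp_lincomb[OF linear_functional_lin linear_functional_lin
        linear_functional_polar] tangent_solid_sections_perp[OF T1 point(1) x0 x1] by blast
  have "\<alpha> \<noteq> 0"
  proof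
    assume "\<alpha> = 0"
    hence "\<forall>w. f x0 w = 0" using ab[rule_format, of nucleus] nucleus nucleus1 ab by simp
    thus False using parabolic point unfolding parabolic_def by blast
  qed
  have "\<beta> \<noteq> 0"
  proof
    assume "\<beta> = 0"
    obtain w where "lin h w = 0" "f x0 w \<noteq> 0" using E point(1,2) hx unfolding elliptic_solid_def by blast
    thus False using ab \<open>\<beta> = 0\<close> by simp
  qed
  have "lin (pencil_solid (1 / \<beta>)) v = (\<alpha> / \<beta>) * lin h v" for v
    using ab \<open>\<beta> \<noteq> 0\<close> by (simp add: lin_pencil_solid field_simps add.assoc[symmetric])
  hence "solid_section A h = solid_section A (pencil_solid (1 / \<beta>))"
    using \<open>\<alpha> \<noteq> 0\<close> \<open>\<beta> \<noteq> 0\<close> by (intro solid_section_cong) simp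
  moreover have "1 / \<beta> \<noteq> 0" using \<open>\<beta> \<noteq> 0\<close> by simp
  ultimately show ?thesis using that by blast
qed

text \<open>The point of contact with \<open>X2\<close> is forced to be \<open>contact_point a\<close>.\<close>

lemma pencil_solid_tangent_root:
  assumes T2: "tangent (solid_section A (pencil_solid a)) (solid_section A h2)"
  shows "tangency_quadratic (a * lin h2 x0) = 0"
proof -
  obtain P where "solid_section A (pencil_solid a) \<inter> solid_section A h2 = {P}"
    using T2 unfolding tangent_def by blast
  then obtain p where p: "p \<noteq> 0" "Q p = 0" "pt p \<in> solid_section A (pencil_solid a)"
    "pt p \<in> solid_section A h2"
    using pt_in_solid_section_iff by (metis IntD1 IntD2 insertI1 solid_sectionE)
  obtain \<mu> \<nu> where mn: "\<forall>v. f p v = \<mu> * lin (pencil_solid a) v + \<nu> * lin h2 v"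
    using linear_functional_kernel_subset_imp_lincomb[OF linear_functional_lin linear_functional_lin
        linear_functional_polar] tangent_solid_sections_perp[OF T2 p(1,3,4)] by blast
  have "\<nu> = \<mu>"
    using mn[rule_format, of nucleus] nucleus lin_pencil_solid_nucleus nucleus2 by (simp add: sum_eq_0_iff_eq)
  hence "\<forall>v. f (p + \<mu> *s contact_point a) v = 0"
    using mn by (simp add: polar_add_left polar_smult_left polar_contact_point algebra_simps)
  then obtain g where g: "p + \<mu> *s contact_point a = g *s nucleus" using radical_multiple_nucleus by blast
  have "lin (pencil_solid a) p = 0" using p(1,3) pt_in_solid_section_iff by blast
  hence "g = 0" using arg_cong[OF g, of "lin (pencil_solid a)"]
    by (simp add: lin_add lin_smult lin_contact_point lin_pencil_solid_nucleus)
  hence "p = \<mu> *s contact_point a" using g vec_sum_eq_0_iff_eq by simp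
  thus ?thesis using p(1,2) by (simp add: qform_smult qform_contact_point)
qed

lemma pencil_solid_sections_inj:
  assumes E: "elliptic_solid A (pencil_solid a)"
    and eq: "solid_section A (pencil_solid a) = solid_section A (pencil_solid b)"
  shows "a = b"
proof -
  have "lin (pencil_solid a) x0 = 0" by (simp add: lin_pencil_solid point)
  then obtain z where z: "z \<noteq> 0" "Q z = 0" "lin (pencil_solid a) z = 0" "f x0 z \<noteq> 0"
    using elliptic_solid_ex_nonperp_singular[OF E point(1,2)] by blast
  hence "lin (pencil_solid b) z = 0" using eq pt_in_solid_section_iff by blast
  hence "(lin h1 z + a * f x0 z) + (lin h1 z + b * f x0 z) = 0" using z(3) by (simp add: lin_pencil_solid)
  hence "(a + b) * f x0 z = 0" by (simp add: algebra_simps)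
  thus ?thesis using z(4) by (simp add: sum_eq_0_iff_eq)
qed

text \<open>The line in which the tangent plane of \<open>X1\<close> at \<open>x0\<close> meets the plane of the conic.\<close>

definition tangent_line :: "('a^5) set" where
  "tangent_line = {v\<in>plane. f x0 v = 0}"

lemma tangent_line:
  assumes t: "lin h2 x0 \<noteq> 0"
  shows "vec_subspace tangent_line" "card tangent_line = CARD('a)^2"
    and "\<And>v. v \<in> tangent_line \<Longrightarrow> Q v = 0 \<Longrightarrow> v = 0"
proof -
  have "pole \<in> plane" using pole by (simp add: plane_def)
  thus "vec_subspace tangent_line" "card tangent_line = CARD('a)^2" unfolding tangent_line_def
    using vec_subspace_kernel[OF vec_subspace_plane linear_functional_polar]
      card_kernel_eq_power[OF vec_subspace_plane linear_functional_polar[of A x0], of pole 2]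
      polar_point_pole t card_plane by auto
  fix v assume v: "v \<in> tangent_line" "Q v = 0"
  hence "lin h1 v = 0" "lin h2 v = 0" "f x0 v = 0" by (auto simp: tangent_line_def plane_def)
  moreover obtain k where "v = k *s x0"
    using elliptic_solid_singular_perp_imp_multiple[OF elliptic1 point(1,3)] calculation point v(2)
    by blast
  ultimately show "v = 0" using t by (simp add: lin_smult)
qed

text \<open>Existence of a root uses that \<open>X2\<close> is elliptic: otherwise the solid \<open>h2\<close> would contain
  the totally singular line of \<open>orthogonal_sum_totally_singular_line\<close>.\<close>

lemma tangency_quadratic_has_root:
  assumes t: "lin h2 x0 \<noteq> 0" shows "\<exists>z. tangency_quadratic z = 0"
proof (rule ccontr)
  assume no_root: "\<nexists>z. tangency_quadratic z = 0"
  define y where "y = (1 / lin h2 x0) *s x0 + nucleus"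
  have y: "lin h1 y = 1" "lin h2 y = 0" "Q y = Q nucleus" "f pole y = 1"
    using t point by (simp_all add: y_def lin_add lin_smult nucleus1 nucleus2 qform_add qform_smult
        polar_add_right polar_smult_right polar_smult_left nucleus polar_commute[of A pole] polar_point_pole)
  have line: "lin h1 v = 0" "lin h2 v = 0" "f x0 v = 0" "f pole v = 0" "f y v = 0"
    if "v \<in> tangent_line" for v
    using that by (auto simp: tangent_line_def plane_def pole y_def polar_add_left polar_smult_left nucleus)
  obtain u1 u2 where u: "u1 \<in> tangent_line" "u2 \<in> tangent_line" "f u1 u2 = 1" "Q u1 \<noteq> 0"
    "Q u1 * Q u2 \<notin> artin_schreier_image"
    using anisotropic_line_basis[OF tangent_line[OF t]] by blast
  have "Q pole * Q y + Q u1 * Q u2 \<in> artin_schreier_image"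
    using artin_schreier_image_add_nonmembers arf_pole_if_no_root[OF no_root] u(5) y(3) by simp
  then obtain s1 s2 s3 where singular: "\<And>a b. Q (a *s (pole + s1 *s u1) + b *s (y + s2 *s u1 + s3 *s u2)) = 0"
    using orthogonal_sum_totally_singular_line[of pole u1 u2 y] line u y(4) qform_pole_neq_0 by metis
  define v1 where "v1 = pole + s1 *s u1"
  define v2 where "v2 = y + s2 *s u1 + s3 *s u2"
  have in_h2: "lin h2 v1 = 0" "lin h2 v2 = 0"
    using line u pole y by (simp_all add: v1_def v2_def lin_add lin_smult)
  have "lin_indep2 v1 v2" unfolding lin_indep2_def vadd_eq_plus vsmult_eq_smult
  proof (intro allI impI)
    fix a b assume ab: "a *s v1 + b *s v2 = 0"
    have "lin h1 (a *s v1 + b *s v2) = b"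
      using line u pole y by (simp add: v1_def v2_def lin_add lin_smult)
    hence "b = 0" using ab by simp
    moreover have "f x0 (a *s v1 + b *s v2) = a * lin h2 x0 + b * f x0 v2"
      using line u by (simp add: v1_def polar_add_right polar_smult_right polar_point_pole)
    hence "a * lin h2 x0 + b * f x0 v2 = 0" using ab by simp
    ultimately show "a = 0 \<and> b = 0" using t by simp
  qed
  thus False
    using elliptic2 in_h2 singular unfolding elliptic_solid_def v1_def v2_def vadd_eq_plus vsmult_eq_smult
    by blast
qed

abbreviation tangent_ovoids :: "('a^5) set set set" where
  "tangent_ovoids \<equiv> {X. elliptic_ovoid A X \<and> pt x0 \<in> X \<and>
     tangent X (solid_section A h1) \<and> tangent X (solid_section A h2)}"

lemma tangent_ovoids_eq:
  "tangent_ovoids = (\<lambda>a. solid_section A (pencil_solid a)) `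
     {a. a \<noteq> 0 \<and> tangency_quadratic (a * lin h2 x0) = 0}"
proof
  show "tangent_ovoids \<subseteq> (\<lambda>a. solid_section A (pencil_solid a)) `
     {a. a \<noteq> 0 \<and> tangency_quadratic (a * lin h2 x0) = 0}"
  proof
    fix X assume "X \<in> tangent_ovoids"
    then obtain h where "elliptic_solid A h" "X = solid_section A h" "pt x0 \<in> X"
      "tangent X (solid_section A h1)" "tangent X (solid_section A h2)"
      unfolding elliptic_ovoid_def by blast
    moreover obtain a where "a \<noteq> 0" "X = solid_section A (pencil_solid a)"
      using tangent_solid_in_pencil calculation by metis
    ultimately show "X \<in> (\<lambda>a. solid_section A (pencil_solid a)) `
        {a. a \<noteq> 0 \<and> tangency_quadratic (a * lin h2 x0) = 0}"
      using pencil_solid_tangent_root by auto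
  qed
  show "(\<lambda>a. solid_section A (pencil_solid a)) ` {a. a \<noteq> 0 \<and> tangency_quadratic (a * lin h2 x0) = 0}
      \<subseteq> tangent_ovoids"
    using pencil_solid_tangent unfolding elliptic_ovoid_def by blast
qed

lemma tangent_ovoids_empty:
  assumes "lin h2 x0 = 0" shows "tangent_ovoids = {}"
  using qform_pole_neq_0 assms by (simp add: tangent_ovoids_eq tangency_quadratic_def)

lemma card_tangent_ovoids:
  assumes t: "lin h2 x0 \<noteq> 0" shows "card tangent_ovoids = 2"
proof -
  obtain z0 where z0: "tangency_quadratic z0 = 0" using tangency_quadratic_has_root[OF t] by blast
  define c where "c = Q nucleus"
  have c: "c \<noteq> 0" using qform_nucleus_neq_0 by (simp add: c_def)
  have root_iff: "tangency_quadratic z = 0 \<longleftrightarrow> z = z0 \<or> z = z0 + 1 / c" for z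
  proof -
    have "tangency_quadratic z = c * z^2 + z + Q pole" for z by (simp add: tangency_quadratic_def c_def)
    thus ?thesis using quadratic_roots[OF c] quadratic_other_root[OF c] z0 by metis
  qed
  hence roots: "tangency_quadratic (a * lin h2 x0) = 0 \<longleftrightarrow> a = z0 / lin h2 x0 \<or> a = (z0 + 1 / c) / lin h2 x0"
    for a using t by (simp add: eq_divide_eq)
  have "tangency_quadratic 0 \<noteq> 0" using qform_pole_neq_0 by (simp add: tangency_quadratic_def)
  hence "z0 \<noteq> 0" "z0 + 1 / c \<noteq> 0" using root_iff by auto
  hence R: "{a. a \<noteq> 0 \<and> tangency_quadratic (a * lin h2 x0) = 0} = {z0 / lin h2 x0, (z0 + 1 / c) / lin h2 x0}"
    using roots t by (auto simp del: mult_eq_0_iff)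
  have "inj_on (\<lambda>a. solid_section A (pencil_solid a)) {a. a \<noteq> 0 \<and> tangency_quadratic (a * lin h2 x0) = 0}"
  proof (rule inj_onI)
    fix a b assume "a \<in> {a. a \<noteq> 0 \<and> tangency_quadratic (a * lin h2 x0) = 0}"
      and "solid_section A (pencil_solid a) = solid_section A (pencil_solid b)"
    thus "a = b" using pencil_solid_tangent(1) pencil_solid_sections_inj by blast
  qed
  moreover have "z0 / lin h2 x0 \<noteq> (z0 + 1 / c) / lin h2 x0" using t c by (simp add: divide_simps)
  ultimately show ?thesis unfolding tangent_ovoids_eq card_image[OF \<open>inj_on _ _\<close>] R by simp
qed

end

lemma (in ovoid_pair) tangent_ovoids_through_point:
  assumes "x \<in> solid_section A h1"
  defines "S \<equiv> {X. elliptic_ovoid A X \<and> x \<in> X \<and>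
    tangent X (solid_section A h1) \<and> tangent X (solid_section A h2)}"
  shows "x \<notin> solid_section A h2 \<Longrightarrow> card S = 2" and "x \<in> solid_section A h2 \<Longrightarrow> S = {}"
proof -
  obtain x0 where x0: "x0 \<noteq> 0" "x = pt x0" "Q x0 = 0" "lin h1 x0 = 0"
    using assms(1) by (rule solid_sectionE)
  interpret ovoid_pair_point A h1 h2 x0 using x0 by unfold_locales auto
  have "x \<in> solid_section A h2 \<longleftrightarrow> lin h2 x0 = 0" using x0 pt_in_solid_section_iff by blast
  thus "x \<notin> solid_section A h2 \<Longrightarrow> card S = 2" "x \<in> solid_section A h2 \<Longrightarrow> S = {}"
    unfolding S_def x0(2) using card_tangent_ovoids tangent_ovoids_empty by simp_all
qed

theorem mainTheorem5:
  fixes A :: "5 \<Rightarrow> 5 \<Rightarrow> 'a::{field,finite}"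
    and n :: nat
    and X1 X2 :: "('a^5) set set"
  assumes q: "CARD('a) = 2 ^ n"
    and Q0: "parabolic A"
    and X1: "elliptic_ovoid A X1" and X2: "elliptic_ovoid A X2"
    and conic: "X1 \<noteq> X2" "nondeg_conic A (X1 \<inter> X2)"
  shows "(\<forall>x \<in> X1 - X2. card {X. elliptic_ovoid A X \<and> x \<in> X \<and> tangent X X1 \<and> tangent X X2} = 2)
     \<and> (\<forall>x \<in> X1 \<inter> X2. \<not> (\<exists>X. elliptic_ovoid A X \<and> x \<in> X \<and> tangent X X1 \<and> tangent X X2))"
proof -
  interpret parabolic_form A
    using char2_if_card_power2[OF q] Q0 by unfold_locales
  obtain h1 where h1: "elliptic_solid A h1" "X1 = solid_section A h1" "lin h1 nucleus = 1"
    using X1 elliptic_solid_normalize unfolding elliptic_ovoid_def by metis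
  obtain h2 where h2: "elliptic_solid A h2" "X2 = solid_section A h2" "lin h2 nucleus = 1"
    using X2 elliptic_solid_normalize unfolding elliptic_ovoid_def by metis
  interpret ovoid_pair A h1 h2
    using h1 h2 conic by unfold_locales simp_all
  show ?thesis
    using tangent_ovoids_through_point h1(2) h2(2) by blast
qed

end
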